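(* Let $X=[0,1]^2$ with the order $(x_1,y_1)\prec(x_2,y_2)$ iff $x_1\le x_2$ and $y_1\le y_2$, and let $\mu$ be the uniform distribution on $X$. Let $\{c_i\}$ be a nonincreasing sequence in $(0,1]$ with $c_i=\Omega(1/\mathrm{poly}(i))$, and let $\alpha>0$ be a constant satisfying $c_i/c_{\lfloor i/2\rfloor}\ge\alpha$ for all sufficiently large $i$. Then for the threshold rule based on $\{c_i\}$, with probability $1-o(c_n)$ (as $n\to\infty$), at least $\alpha n/4$ of the samples in $S_n$ belong to $\mathcal{X}_n$.
   Context: For $x\in X$ let $\mathcal{U}(x)=\{y: x\prec y\}$. The threshold rule based on $\{c_i\}$ is $\mathcal{X}_0=X$, $\mathcal{X}_i=\{x\in X:\mu(\mathcal{U}(x))\le c_i\}$ for $i\ge1$. Samples $x_1,x_2,\dots$ are i.i.d. from $\mu$; sample $x_t$ is selected iff $x_t\in\mathcal{X}_j$, where $j$ is the number of samples selected among $x_1,\dots,x_{t-1}$. $S_n$ denotes the set of the first $n$ selected samples. *)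

theory Defs
  imports "HOL-Probability.Probability" "HOL-Library.Landau_Symbols"
begin

definition Xsq :: "(real \<times> real) set" where
  "Xsq = {0..1} \<times> {0..1}"

definition mu :: "(real \<times> real) measure" where
  "mu = uniform_measure lborel Xsq"

definition prec :: "real \<times> real \<Rightarrow> real \<times> real \<Rightarrow> bool" where
  "prec p q \<longleftrightarrow> fst p \<le> fst q \<and> snd p \<le> snd q"

definition upset :: "real \<times> real \<Rightarrow> (real \<times> real) set" where
  "upset x = {y \<in> Xsq. prec x y}"

definition thr_set :: "(nat \<Rightarrow> real) \<Rightarrow> nat \<Rightarrow> (real \<times> real) set" where
  "thr_set c i = (if i = 0 then Xsq else {x \<in> Xsq. measure mu (upset x) \<le> c i})"

fun nsel :: "(nat \<Rightarrow> real) \<Rightarrow> (nat \<Rightarrow> real \<times> real) \<Rightarrow> nat \<Rightarrow> nat" where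
  "nsel c \<omega> 0 = 0"
| "nsel c \<omega> (Suc t) = nsel c \<omega> t + (if \<omega> t \<in> thr_set c (nsel c \<omega> t) then 1 else 0)"

definition selected :: "(nat \<Rightarrow> real) \<Rightarrow> (nat \<Rightarrow> real \<times> real) \<Rightarrow> nat \<Rightarrow> bool" where
  "selected c \<omega> t \<longleftrightarrow> \<omega> t \<in> thr_set c (nsel c \<omega> t)"

text \<open>Good event: the first n selected samples exist (they are the selected samples
  among the first T samples, for some T with exactly n selections), and at least
  alpha*n/4 of them lie in X_n.\<close>
definition good_event :: "(nat \<Rightarrow> real) \<Rightarrow> real \<Rightarrow> nat \<Rightarrow> (nat \<Rightarrow> real \<times> real) \<Rightarrow> bool" where
  "good_event c \<alpha> n \<omega> \<longleftrightarrow> (\<exists>T. nsel c \<omega> T = n \<and>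
      real (card {t. t < T \<and> selected c \<omega> t \<and> \<omega> t \<in> thr_set c n}) \<ge> \<alpha> * real n / 4)"

text \<open>The i.i.d. sample sequence omega 0, omega 1, ... (paper: x_1, x_2, ...).\<close>
definition sample_space :: "(nat \<Rightarrow> real \<times> real) measure" where
  "sample_space = PiM UNIV (\<lambda>_. mu)"

end

theory Submission
  imports Defs "HOL-Real_Asymp.Real_Asymp"
begin

text \<open>For the uniform measure on the square, the points whose up-set has measure at most \<open>a\<close> form
  the region \<open>(1 - x) (1 - y) \<le> a\<close>, whose vertical slices have length \<open>min 1 (a / (1 - x))\<close>;
  hence shrinking \<open>a\<close> by a factor \<open>\<alpha> \<le> 1\<close> shrinks the measure of the region by at most that factor.
  While the rule is in a stage \<open>j\<close> between \<open>n/2\<close> and \<open>n\<close>, a sample is selected iff it lies in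
  \<open>X\<^sub>j \<subseteq> X\<^bsub>n/2\<^esub>\<close>, so \<open>c\<^sub>n \<ge> \<alpha> c\<^bsub>n/2\<^esub>\<close> makes a selected sample land in \<open>X\<^sub>n\<close> with conditional
  probability at least \<open>\<alpha>\<close>. The stages form a Markov chain driven by the samples. An exponential
  supermartingale shows that fewer than \<open>\<alpha> n / 4\<close> of the selections made in those stages land in
  \<open>X\<^sub>n\<close> with probability at most \<open>2\<^bsup>\<alpha> n / 4\<^esup> (1 - \<alpha>/2)\<^bsup>n/2\<^esup> \<le> exp (- \<alpha> (1 - ln 2) n / 4)\<close>, and a second one shows
  that stage \<open>n\<close> is reached almost surely. Exponential decay is \<open>o(c\<^sub>n)\<close> because \<open>c\<^sub>n\<close> is bounded
  below by a power of \<open>1/n\<close>.\<close>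

section \<open>The stage process\<close>

text \<open>The recursion consumes the
  first sample, which matches the decomposition of the product measure in \<open>nn_integral_PiM_case_nat\<close>.\<close>
fun stage :: "(nat \<Rightarrow> 'a set) \<Rightarrow> nat \<Rightarrow> (nat \<Rightarrow> 'a) \<Rightarrow> nat \<Rightarrow> nat" where
  "stage A j \<omega> 0 = j"
| "stage A j \<omega> (Suc t) = stage A (if \<omega> 0 \<in> A j then Suc j else j) (\<lambda>i. \<omega> (Suc i)) t"

lemma stage_Suc_right: "stage A j \<omega> (Suc t) = stage A j \<omega> t + (if \<omega> t \<in> A (stage A j \<omega> t) then 1 else 0)"
proof (induction t arbitrary: j \<omega>)
  case (Suc t)
  define j' where "j' = (if \<omega> 0 \<in> A j then Suc j else j)"
  define \<omega>' where "\<omega>' = (\<lambda>i. \<omega> (Suc i))"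
  have "stage A j \<omega> (Suc (Suc t)) = stage A j' \<omega>' (Suc t)"
    and "stage A j \<omega> (Suc t) = stage A j' \<omega>' t"
    by (simp_all only: stage.simps j'_def \<omega>'_def)
  with Suc.IH[of j' \<omega>'] show ?case
    by (simp add: \<omega>'_def)
qed simp

declare stage.simps(2) [simp del]

lemma stage_ge_start: "j \<le> stage A j \<omega> t"
  by (induction t) (auto simp: stage_Suc_right intro: le_trans[OF _ le_add1])

lemma stage_mono: "s \<le> t \<Longrightarrow> stage A j \<omega> s \<le> stage A j \<omega> t"
  by (induction t) (auto simp: stage_Suc_right le_Suc_eq)

lemma nsel_eq_stage: "nsel c \<omega> t = stage (thr_set c) 0 \<omega> t"
  by (induction t) (simp_all add: stage_Suc_right)

definition hits :: "(nat \<Rightarrow> 'a set) \<Rightarrow> 'a set \<Rightarrow> nat \<Rightarrow> nat \<Rightarrow> nat \<Rightarrow> (nat \<Rightarrow> 'a) \<Rightarrow> nat \<Rightarrow> nat" where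
  "hits A B m n j \<omega> T = card {t. t < T \<and> m \<le> stage A j \<omega> t \<and> stage A j \<omega> t < n
      \<and> \<omega> t \<in> A (stage A j \<omega> t) \<and> \<omega> t \<in> B}"

lemma card_less_Suc_shift:
  "card {t. t < Suc T \<and> P t} = (if P 0 then 1 else 0) + card {t. t < T \<and> P (Suc t)}"
proof -
  have "{t. t < Suc T \<and> P t} = {t. t = 0 \<and> P 0} \<union> Suc ` {t. t < T \<and> P (Suc t)}"
    by (auto simp: less_Suc_eq_0_disj)
  moreover have "card (Suc ` {t. t < T \<and> P (Suc t)}) = card {t. t < T \<and> P (Suc t)}"
    by (simp add: card_image)
  ultimately show ?thesis
    by (simp add: card_Un_disjoint)
qed

lemma hits_Suc:
  "hits A B m n j \<omega> (Suc T) = (if m \<le> j \<and> j < n \<and> \<omega> 0 \<in> A j \<and> \<omega> 0 \<in> B then 1 else 0)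
     + hits A B m n (if \<omega> 0 \<in> A j then Suc j else j) (\<lambda>i. \<omega> (Suc i)) T"
  unfolding hits_def by (subst card_less_Suc_shift) (simp add: stage.simps(2))

fun weight :: "(nat \<Rightarrow> 'a set) \<Rightarrow> 'a set \<Rightarrow> nat \<Rightarrow> nat \<Rightarrow> real \<Rightarrow> real \<Rightarrow> real \<Rightarrow> nat \<Rightarrow> nat \<Rightarrow> (nat \<Rightarrow> 'a) \<Rightarrow> ennreal" where
  "weight A B m n r \<rho> e 0 j \<omega> = (if n \<le> j then 1 else ennreal e)"
| "weight A B m n r \<rho> e (Suc T) j \<omega> =
     (if n \<le> j then 1
      else if \<omega> 0 \<in> A j
      then ennreal (if m \<le> j \<and> \<omega> 0 \<in> B then r else 1) * weight A B m n r \<rho> e T (Suc j) (\<lambda>i. \<omega> (Suc i))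
      else ennreal \<rho> * weight A B m n r \<rho> e T j (\<lambda>i. \<omega> (Suc i)))"

lemma measurable_shift: "(\<lambda>\<omega> i. \<omega> (Suc i)) \<in> measurable (PiM UNIV (\<lambda>_. M)) (PiM UNIV (\<lambda>_. M))"
  by (rule measurable_PiM_single') (auto simp: space_PiM)

lemma measurable_weight [measurable]:
  assumes A: "\<And>j. A j \<in> sets M" and B: "B \<in> sets M"
  shows "weight A B m n r \<rho> e T j \<in> borel_measurable (PiM UNIV (\<lambda>_. M))"
proof (induction T arbitrary: j)
  case 0
  have "weight A B m n r \<rho> e 0 j = (\<lambda>_. if n \<le> j then 1 else ennreal e)"
    by (rule ext) simp
  then show ?case by simp
next
  case (Suc T)
  have first: "(\<lambda>\<omega>. \<omega> 0) \<in> measurable (PiM UNIV (\<lambda>_. M)) M"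
    by measurable
  have accept: "{\<omega> \<in> space (PiM UNIV (\<lambda>_. M)). \<omega> 0 \<in> A j} \<in> sets (PiM UNIV (\<lambda>_. M))"
    using measurable_sets[OF first A[of j]] by (simp add: vimage_def Int_def conj_commute)
  have factor: "(\<lambda>\<omega>. ennreal (if m \<le> j \<and> \<omega> 0 \<in> B then r else 1)) \<in> borel_measurable (PiM UNIV (\<lambda>_. M))"
    using first B by measurable
  have rest: "(\<lambda>\<omega>. weight A B m n r \<rho> e T k (\<lambda>i. \<omega> (Suc i))) \<in> borel_measurable (PiM UNIV (\<lambda>_. M))" for k
    using measurable_comp[OF measurable_shift Suc.IH[of k]] by (simp add: comp_def)
  show ?case
  proof (cases "n \<le> j")
    case False
    then show ?thesis
      by (simp only: weight.simps if_False)
         (intro measurable_If accept borel_measurable_times_ennreal factor rest measurable_const, simp_all)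
  qed simp
qed

lemma (in prob_space) nn_integral_PiM_case_nat:
  assumes f: "f \<in> borel_measurable (PiM UNIV (\<lambda>_. M))"
  shows "(\<integral>\<^sup>+\<omega>. f \<omega> \<partial>PiM UNIV (\<lambda>_. M)) = (\<integral>\<^sup>+x. \<integral>\<^sup>+\<omega>. f (case_nat x \<omega>) \<partial>PiM UNIV (\<lambda>_. M) \<partial>M)"
proof -
  interpret S: sequence_space M ..
  have "(\<integral>\<^sup>+\<omega>. f \<omega> \<partial>S.S) = (\<integral>\<^sup>+\<omega>. f (case_nat (fst \<omega>) (snd \<omega>)) \<partial>(M \<Otimes>\<^sub>M S.S))"
    by (subst S.PiM_iter[symmetric]) (simp add: nn_integral_distr f split_beta')
  also have "\<dots> = (\<integral>\<^sup>+x. \<integral>\<^sup>+\<omega>. f (case_nat x \<omega>) \<partial>S.S \<partial>M)"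
    by (subst S.P.nn_integral_fst[symmetric]) (use f in simp_all)
  finally show ?thesis .
qed

lemma (in prob_space) nn_integral_accept_factor:
  assumes "A \<in> events" "B \<in> events" "0 \<le> r"
  shows "(\<integral>\<^sup>+x. indicator A x * ennreal (if b \<and> x \<in> B then r else 1) \<partial>M)
    = ennreal (if b then r * prob (A \<inter> B) + prob (A - B) else prob A)"
proof (cases b)
  case True
  have "(\<integral>\<^sup>+x. indicator A x * ennreal (if b \<and> x \<in> B then r else 1) \<partial>M)
      = (\<integral>\<^sup>+x. ennreal r * indicator (A \<inter> B) x + indicator (A - B) x \<partial>M)"
    using True by (intro nn_integral_cong) (auto split: split_indicator)
  also have "\<dots> = ennreal r * prob (A \<inter> B) + prob (A - B)"
    using assms by (simp add: nn_integral_add nn_integral_cmult_indicator emeasure_eq_measure)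
  finally show ?thesis
    using True assms by (simp add: ennreal_mult ennreal_plus)
qed (use assms in \<open>simp add: emeasure_eq_measure\<close>)

lemma (in prob_space) nn_integral_step:
  assumes A: "A \<in> events" and B: "B \<in> events" and "0 \<le> r" "0 \<le> \<rho>" "0 \<le> C\<^sub>1" "0 \<le> C\<^sub>0"
  shows "(\<integral>\<^sup>+x. indicator A x * ennreal (if b \<and> x \<in> B then r else 1) * ennreal C\<^sub>1
      + indicator (space M - A) x * ennreal \<rho> * ennreal C\<^sub>0 \<partial>M)
    = ennreal ((if b then r * prob (A \<inter> B) + prob (A - B) else prob A) * C\<^sub>1 + \<rho> * (1 - prob A) * C\<^sub>0)"
proof -
  have [measurable]: "A \<in> sets M" "B \<in> sets M"
    using A B by auto
  have "(\<integral>\<^sup>+x. indicator A x * ennreal (if b \<and> x \<in> B then r else 1) * ennreal C\<^sub>1 \<partial>M)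
      = ennreal (if b then r * prob (A \<inter> B) + prob (A - B) else prob A) * ennreal C\<^sub>1"
    using assms by (subst nn_integral_multc) (simp_all add: nn_integral_accept_factor)
  moreover have "(\<integral>\<^sup>+x. indicator (space M - A) x * ennreal \<rho> * ennreal C\<^sub>0 \<partial>M)
      = ennreal (\<rho> * C\<^sub>0) * emeasure M (space M - A)"
    using assms by (subst nn_integral_cmult_indicator[symmetric])
      (auto intro!: nn_integral_cong simp: ennreal_mult mult_ac)
  moreover have "emeasure M (space M - A) = ennreal (1 - prob A)"
    using A by (simp add: emeasure_eq_measure prob_compl)
  ultimately show ?thesis
    using assms by (subst nn_integral_add) (simp_all add: ennreal_mult ennreal_plus mult_ac)
qed

text \<open>A supermartingale bound: if one step of the stage chain, averaged over the next sample, cannot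
  increase \<open>C\<close>, then \<open>C\<close> bounds the expected weight at every horizon.\<close>
lemma (in prob_space) nn_integral_weight_le:
  assumes A: "\<And>j. A j \<in> events" and B: "B \<in> events" and r: "0 \<le> r" and \<rho>: "0 \<le> \<rho>"
    and C: "\<And>j. 0 \<le> C j"
    and step_low: "\<And>j. j < m \<Longrightarrow> j < n \<Longrightarrow> prob (A j) * C (Suc j) + \<rho> * (1 - prob (A j)) * C j \<le> C j"
    and step_high: "\<And>j. m \<le> j \<Longrightarrow> j < n \<Longrightarrow>
      (r * prob (A j \<inter> B) + prob (A j - B)) * C (Suc j) + \<rho> * (1 - prob (A j)) * C j \<le> C j"
    and timeout: "\<And>j. j < n \<Longrightarrow> e \<le> C j" and stopped: "\<And>j. n \<le> j \<Longrightarrow> 1 \<le> C j"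
  shows "(\<integral>\<^sup>+\<omega>. weight A B m n r \<rho> e T j \<omega> \<partial>PiM UNIV (\<lambda>_. M)) \<le> ennreal (C j)"
proof -
  interpret S: prob_space "PiM UNIV (\<lambda>_. M)"
    by (rule prob_space_PiM) (rule prob_space_axioms)
  show ?thesis
  proof (induction T arbitrary: j)
    case 0
    show ?case
      using timeout stopped by (simp add: S.emeasure_space_1 ennreal_leI del: ennreal_1)
  next
    case (Suc T)
    show ?case
    proof (cases "n \<le> j")
      case True
      then show ?thesis
        using stopped by (simp add: S.emeasure_space_1 ennreal_leI del: ennreal_1)
    next
      case False
      define p where "p = (if m \<le> j then r * prob (A j \<inter> B) + prob (A j - B) else prob (A j))"
      have "(\<integral>\<^sup>+\<omega>. weight A B m n r \<rho> e (Suc T) j \<omega> \<partial>PiM UNIV (\<lambda>_. M))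
          = (\<integral>\<^sup>+x. \<integral>\<^sup>+\<omega>. weight A B m n r \<rho> e (Suc T) j (case_nat x \<omega>) \<partial>PiM UNIV (\<lambda>_. M) \<partial>M)"
        using A B by (intro nn_integral_PiM_case_nat measurable_weight) auto
      also have "\<dots> = (\<integral>\<^sup>+x. indicator (A j) x * ennreal (if m \<le> j \<and> x \<in> B then r else 1)
            * (\<integral>\<^sup>+\<omega>. weight A B m n r \<rho> e T (Suc j) \<omega> \<partial>PiM UNIV (\<lambda>_. M))
          + indicator (space M - A j) x * ennreal \<rho> * (\<integral>\<^sup>+\<omega>. weight A B m n r \<rho> e T j \<omega> \<partial>PiM UNIV (\<lambda>_. M)) \<partial>M)"
        using False A B
        by (intro nn_integral_cong) (auto simp: nn_integral_cmult split: split_indicator)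
      also have "\<dots> \<le> (\<integral>\<^sup>+x. indicator (A j) x * ennreal (if m \<le> j \<and> x \<in> B then r else 1) * ennreal (C (Suc j))
          + indicator (space M - A j) x * ennreal \<rho> * ennreal (C j) \<partial>M)"
        by (intro nn_integral_mono add_mono mult_left_mono Suc.IH) simp_all
      also have "\<dots> = ennreal (p * C (Suc j) + \<rho> * (1 - prob (A j)) * C j)"
        unfolding p_def by (rule nn_integral_step) (use A B r \<rho> C in auto)
      also have "\<dots> \<le> ennreal (C j)"
        using False step_low step_high by (intro ennreal_leI) (auto simp: p_def not_le)
      finally show ?thesis .
    qed
  qed
qed

lemma weight_ge_hits:
  assumes r: "0 \<le> r" "r \<le> 1" and "n \<le> stage A j \<omega> T"
  shows "ennreal r ^ hits A B m n j \<omega> T \<le> weight A B m n r 1 0 T j \<omega>"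
  using assms(3)
proof (induction T arbitrary: j \<omega>)
  case 0
  then show ?case by (simp add: hits_def)
next
  case (Suc T)
  let ?\<omega>' = "\<lambda>i. \<omega> (Suc i)"
  have le_1: "ennreal r ^ k \<le> 1" for k
    using r by (simp add: power_le_one ennreal_leI del: ennreal_1)
  show ?case
  proof (cases "n \<le> j")
    case True
    then show ?thesis using le_1 by simp
  next
    case below: False
    show ?thesis
    proof (cases "\<omega> 0 \<in> A j")
      case True
      then have IH: "ennreal r ^ hits A B m n (Suc j) ?\<omega>' T \<le> weight A B m n r 1 0 T (Suc j) ?\<omega>'"
        using Suc by (intro Suc.IH) (simp add: stage.simps(2))
      show ?thesis
        using below True IH by (auto simp: hits_Suc intro: mult_left_mono)
    next
      case False
      then have "ennreal r ^ hits A B m n j ?\<omega>' T \<le> weight A B m n r 1 0 T j ?\<omega>'"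
        using Suc by (intro Suc.IH) (simp add: stage.simps(2))
      then show ?thesis
        using below False by (simp add: hits_Suc)
    qed
  qed
qed

lemma weight_ge_stuck:
  assumes \<rho>: "1 \<le> \<rho>" and "stage A j \<omega> T < n"
  shows "ennreal \<rho> ^ (T + j - n) \<le> weight A B n n r \<rho> 1 T j \<omega>"
  using assms(2)
proof (induction T arbitrary: j \<omega>)
  case (Suc T)
  let ?\<omega>' = "\<lambda>i. \<omega> (Suc i)"
  have below: "j < n"
    using Suc.prems stage_ge_start[of j A \<omega> "Suc T"] by simp
  show ?case
  proof (cases "\<omega> 0 \<in> A j")
    case True
    then have "ennreal \<rho> ^ (T + Suc j - n) \<le> weight A B n n r \<rho> 1 T (Suc j) ?\<omega>'"
      using Suc by (intro Suc.IH) (simp add: stage.simps(2))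
    then show ?thesis
      using below True by simp
  next
    case False
    then have "ennreal \<rho> ^ (T + j - n) \<le> weight A B n n r \<rho> 1 T j ?\<omega>'"
      using Suc by (intro Suc.IH) (simp add: stage.simps(2))
    then have "ennreal \<rho> * ennreal \<rho> ^ (T + j - n) \<le> ennreal \<rho> * weight A B n n r \<rho> 1 T j ?\<omega>'"
      by (rule mult_left_mono) simp
    moreover have "ennreal \<rho> ^ (Suc T + j - n) \<le> ennreal \<rho> * ennreal \<rho> ^ (T + j - n)"
      using \<rho> by (subst power_Suc[symmetric], intro power_increasing) (auto simp: ennreal_leI)
    ultimately show ?thesis
      using below False by simp
  qed
qed simp

lemma (in prob_space) nn_integral_hits_weight_le:
  assumes A: "\<And>j. A j \<in> events" and B: "B \<in> events" and \<alpha>: "0 \<le> \<alpha>" "\<alpha> \<le> 1"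
    and hit: "\<And>j. m \<le> j \<Longrightarrow> j < n \<Longrightarrow> \<alpha> * prob (A j) \<le> prob (A j \<inter> B)"
  shows "(\<integral>\<^sup>+\<omega>. weight A B m n (1/2) 1 0 T 0 \<omega> \<partial>PiM UNIV (\<lambda>_. M)) \<le> ennreal ((1 - \<alpha>/2) ^ (n - m))"
proof -
  define q where "q = 1 - \<alpha>/2"
  have q: "0 \<le> q" using \<alpha> by (simp add: q_def)
  have "(\<integral>\<^sup>+\<omega>. weight A B m n (1/2) 1 0 T 0 \<omega> \<partial>PiM UNIV (\<lambda>_. M)) \<le> ennreal (q ^ (n - max 0 m))"
  proof (rule nn_integral_weight_le[OF A B])
    fix j assume "m \<le> j" "j < n"
    define p where "p = q ^ (n - Suc j)"
    have p: "0 \<le> p" "q ^ (n - j) = q * p"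
      using q \<open>j < n\<close> by (simp_all add: p_def Suc_diff_Suc flip: power_Suc)
    have "prob (A j) - prob (A j \<inter> B) / 2 \<le> q * prob (A j)"
      using hit[OF \<open>m \<le> j\<close> \<open>j < n\<close>] by (simp add: q_def algebra_simps)
    then have "(prob (A j) - prob (A j \<inter> B) / 2) * p \<le> q * prob (A j) * p"
      using p by (intro mult_right_mono)
    then show "(1/2 * prob (A j \<inter> B) + prob (A j - B)) * q ^ (n - max (Suc j) m)
        + 1 * (1 - prob (A j)) * q ^ (n - max j m) \<le> q ^ (n - max j m)"
      using \<open>m \<le> j\<close> A B p by (simp add: finite_measure_Diff' max_def algebra_simps flip: p_def)
  qed (use q in \<open>auto simp: max_def algebra_simps\<close>)
  then show ?thesis by (simp add: q_def)
qed

lemma (in prob_space) nn_integral_stuck_weight_le: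
  assumes A: "\<And>j. A j \<in> events" and a: "0 < a" "\<And>j. j < n \<Longrightarrow> a \<le> prob (A j)"
  shows "(\<integral>\<^sup>+\<omega>. weight A {} n n 1 (1 + a/2) 1 T 0 \<omega> \<partial>PiM UNIV (\<lambda>_. M)) \<le> ennreal (2 ^ n)"
proof -
  have "(\<integral>\<^sup>+\<omega>. weight A {} n n 1 (1 + a/2) 1 T 0 \<omega> \<partial>PiM UNIV (\<lambda>_. M)) \<le> ennreal (2 ^ (n - 0))"
  proof (rule nn_integral_weight_le[OF A])
    fix j assume "j < n"
    define p where "p = prob (A j)"
    have "a \<le> p" "p \<le> 1" using a \<open>j < n\<close> by (simp_all add: p_def)
    then have "(1 + a/2) * (1 - p) \<le> (1 + p/2) * (1 - p)"
      by (intro mult_right_mono) simp_all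
    also have "\<dots> \<le> 1 - p/2"
      by (simp add: algebra_simps)
    finally have "(1 + a/2) * (1 - p) \<le> 1 - p/2" .
    then have "(1 + a/2) * (1 - p) * 2 ^ (n - j) \<le> (1 - p/2) * 2 ^ (n - j)"
      by (intro mult_right_mono) simp_all
    moreover have "(2::real) ^ (n - j) = 2 * 2 ^ (n - Suc j)"
      using \<open>j < n\<close> by (simp add: Suc_diff_Suc flip: power_Suc)
    ultimately show "prob (A j) * 2 ^ (n - Suc j) + (1 + a/2) * (1 - prob (A j)) * 2 ^ (n - j) \<le> 2 ^ (n - j)"
      by (simp add: p_def algebra_simps)
  qed (use a in auto)
  then show ?thesis
    by simp
qed

lemma one_le_weights:
  assumes few: "\<And>T. n \<le> stage A 0 \<omega> T \<Longrightarrow> real (hits A B m n 0 \<omega> T) < K" and \<rho>: "1 \<le> \<rho>"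
  shows "1 \<le> ennreal (2 powr K) * weight A B m n (1/2) 1 0 (T + n) 0 \<omega>
    + ennreal (inverse (\<rho> ^ T)) * weight A {} n n 1 \<rho> 1 (T + n) 0 \<omega>"
proof (cases "stage A 0 \<omega> (T + n) < n")
  case True
  have "ennreal (\<rho> ^ T) \<le> weight A {} n n 1 \<rho> 1 (T + n) 0 \<omega>"
    using weight_ge_stuck[OF \<rho> True] \<rho> by (simp add: ennreal_power)
  then have "ennreal (inverse (\<rho> ^ T)) * ennreal (\<rho> ^ T)
      \<le> ennreal (inverse (\<rho> ^ T)) * weight A {} n n 1 \<rho> 1 (T + n) 0 \<omega>"
    by (rule mult_left_mono) simp
  moreover have "ennreal (inverse (\<rho> ^ T)) * ennreal (\<rho> ^ T) = 1"
    using \<rho> by (simp flip: ennreal_mult)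
  ultimately show ?thesis
    by (simp add: add_increasing)
next
  case False
  define h where "h = hits A B m n 0 \<omega> (T + n)"
  have "ennreal (1/2) ^ h \<le> weight A B m n (1/2) 1 0 (T + n) 0 \<omega>"
    unfolding h_def by (rule weight_ge_hits) (use False in auto)
  moreover have "ennreal ((1/2) ^ h) = ennreal (1/2) ^ h"
    by (rule ennreal_power[symmetric]) simp
  ultimately have "ennreal (2 powr K) * ennreal ((1/2) ^ h) \<le> ennreal (2 powr K) * weight A B m n (1/2) 1 0 (T + n) 0 \<omega>"
    by (intro mult_left_mono) simp_all
  moreover have "1 \<le> 2 powr K * (1/2) ^ h"
  proof -
    have "(2::real) powr h \<le> 2 powr K"
      using few[of "T + n"] False by (intro powr_mono) (auto simp: h_def)
    then show ?thesis
      by (simp add: powr_realpow power_one_over divide_simps)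
  qed
  then have "1 \<le> ennreal (2 powr K) * ennreal ((1/2) ^ h)"
    by (simp add: ennreal_leI flip: ennreal_mult del: ennreal_1)
  ultimately show ?thesis
    by (simp add: add_increasing2 order_trans)
qed

lemma (in prob_space) prob_few_hits_le:
  assumes A: "\<And>j. A j \<in> events" and B: "B \<in> events"
    and a: "0 < a" "\<And>j. j < n \<Longrightarrow> a \<le> prob (A j)"
    and \<alpha>: "0 \<le> \<alpha>" "\<alpha> \<le> 1" "\<And>j. m \<le> j \<Longrightarrow> j < n \<Longrightarrow> \<alpha> * prob (A j) \<le> prob (A j \<inter> B)"
    and E: "E \<in> sets (PiM UNIV (\<lambda>_. M))"
    and few: "\<And>\<omega> T. \<omega> \<in> E \<Longrightarrow> n \<le> stage A 0 \<omega> T \<Longrightarrow> real (hits A B m n 0 \<omega> T) < K"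
  shows "measure (PiM UNIV (\<lambda>_. M)) E \<le> 2 powr K * (1 - \<alpha>/2) ^ (n - m)"
proof -
  interpret S: prob_space "PiM UNIV (\<lambda>_. M)"
    by (rule prob_space_PiM) (rule prob_space_axioms)
  define \<rho> where "\<rho> = 1 + a/2"
  define W where "W T \<omega> = ennreal (2 powr K) * weight A B m n (1/2) 1 0 (T + n) 0 \<omega>
    + ennreal (inverse (\<rho> ^ T)) * weight A {} n n 1 \<rho> 1 (T + n) 0 \<omega>" for T \<omega>
  have \<rho>: "1 < \<rho>" using a by (simp add: \<rho>_def)
  have bound: "S.prob E \<le> 2 powr K * (1 - \<alpha>/2) ^ (n - m) + inverse (\<rho> ^ T) * 2 ^ n" for T
  proof -
    have "emeasure (PiM UNIV (\<lambda>_. M)) E = (\<integral>\<^sup>+\<omega>. indicator E \<omega> \<partial>PiM UNIV (\<lambda>_. M))"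
      using E by simp
    also have "\<dots> \<le> (\<integral>\<^sup>+\<omega>. W T \<omega> \<partial>PiM UNIV (\<lambda>_. M))"
      using few \<rho> by (intro nn_integral_mono) (auto simp: W_def one_le_weights split: split_indicator)
    also have "\<dots> = ennreal (2 powr K) * (\<integral>\<^sup>+\<omega>. weight A B m n (1/2) 1 0 (T + n) 0 \<omega> \<partial>PiM UNIV (\<lambda>_. M))
        + ennreal (inverse (\<rho> ^ T)) * (\<integral>\<^sup>+\<omega>. weight A {} n n 1 \<rho> 1 (T + n) 0 \<omega> \<partial>PiM UNIV (\<lambda>_. M))"
      using A B unfolding W_def by (simp add: nn_integral_add nn_integral_cmult)
    also have "\<dots> \<le> ennreal (2 powr K) * ennreal ((1 - \<alpha>/2) ^ (n - m)) + ennreal (inverse (\<rho> ^ T)) * ennreal (2 ^ n)"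
      unfolding \<rho>_def
      by (intro add_mono mult_left_mono nn_integral_hits_weight_le nn_integral_stuck_weight_le A B a \<alpha>) simp_all
    also have "\<dots> = ennreal (2 powr K * (1 - \<alpha>/2) ^ (n - m) + inverse (\<rho> ^ T) * 2 ^ n)"
      using \<alpha> \<rho> by (simp add: ennreal_mult ennreal_plus)
    finally have "ennreal (S.prob E) \<le> ennreal (2 powr K * (1 - \<alpha>/2) ^ (n - m) + inverse (\<rho> ^ T) * 2 ^ n)"
      using E by (simp only: S.emeasure_eq_measure)
    then show ?thesis
      by (subst (asm) ennreal_le_iff) (use \<alpha> \<rho> in simp_all)
  qed
  have "(\<lambda>T. 2 powr K * (1 - \<alpha>/2) ^ (n - m) + inverse (\<rho> ^ T) * 2 ^ n) \<longlonglongrightarrow> 2 powr K * (1 - \<alpha>/2) ^ (n - m) + 0 * 2 ^ n"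
    by (intro tendsto_intros LIMSEQ_inverse_realpow_zero \<rho>)
  then show ?thesis
    using bound by (intro LIMSEQ_le_const) auto
qed

section \<open>The uniform measure on the square\<close>

lemma sets_mu [simp, measurable_cong]: "sets mu = sets borel"
  by (simp add: mu_def)

lemma emeasure_lborel_Icc_Times_Icc:
  "emeasure (lborel :: (real \<times> real) measure) ({a..b} \<times> {c..d}) = emeasure lborel {a..b} * emeasure lborel {c..d}"
  by (subst lborel_prod[symmetric]) (simp add: lborel.emeasure_pair_measure_Times)

lemma sets_Xsq [measurable]: "Xsq \<in> sets borel"
  unfolding Xsq_def by (intro borel_closed closed_Times) auto

lemma emeasure_Xsq: "emeasure lborel Xsq = 1"
  by (simp add: Xsq_def emeasure_lborel_Icc_Times_Icc)

lemma prob_space_mu: "prob_space mu"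
  unfolding mu_def by (rule prob_space_uniform_measure) (auto simp: emeasure_Xsq)

interpretation mu: prob_space mu
  by (rule prob_space_mu)

lemma emeasure_mu: "A \<in> sets borel \<Longrightarrow> emeasure mu A = emeasure lborel (A \<inter> Xsq)"
  by (simp add: mu_def emeasure_Xsq Int_commute divide_ennreal_def)

lemma measure_upset: "x \<in> Xsq \<Longrightarrow> measure mu (upset x) = (1 - fst x) * (1 - snd x)"
proof -
  assume x: "x \<in> Xsq"
  then have "upset x = {fst x..1} \<times> {snd x..1}" "upset x \<inter> Xsq = {fst x..1} \<times> {snd x..1}"
    by (auto simp: upset_def prec_def Xsq_def)
  then have "measure mu (upset x) = measure lborel ({fst x..1} \<times> {snd x..1})"
    by (simp add: measure_def emeasure_mu borel_closed closed_Times)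
  also have "\<dots> = (1 - fst x) * (1 - snd x)"
    using x by (simp add: measure_def emeasure_lborel_Icc_Times_Icc Xsq_def ennreal_mult'[symmetric] mem_Times_iff)
  finally show ?thesis .
qed

definition small_upset :: "real \<Rightarrow> (real \<times> real) set" where
  "small_upset a = {x \<in> Xsq. measure mu (upset x) \<le> a}"

lemma small_upset_eq: "small_upset a = {x \<in> Xsq. (1 - fst x) * (1 - snd x) \<le> a}"
  by (auto simp: small_upset_def measure_upset)

lemma sets_small_upset [measurable]: "small_upset a \<in> sets borel"
proof -
  have "small_upset a = Xsq \<inter> {x. (1 - fst x) * (1 - snd x) \<le> a}"
    by (auto simp: small_upset_eq)
  moreover have "closed {x :: real \<times> real. (1 - fst x) * (1 - snd x) \<le> a}"
    by (intro closed_Collect_le continuous_intros)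
  moreover have "closed Xsq"
    by (simp add: Xsq_def closed_Times)
  ultimately show ?thesis
    by (simp add: borel_closed closed_Int)
qed

lemma small_upset_subset: "small_upset a \<subseteq> Xsq"
  by (auto simp: small_upset_def)

lemma small_upset_mono: "a \<le> b \<Longrightarrow> small_upset a \<subseteq> small_upset b"
  by (auto simp: small_upset_def)

lemma small_upset_1: "small_upset 1 = Xsq"
  by (auto simp: small_upset_eq Xsq_def intro: mult_le_one)

lemma thr_set_eq_small_upset: "1 \<le> i \<Longrightarrow> thr_set c i = small_upset (c i)"
  by (simp add: thr_set_def small_upset_def)

lemma sets_thr_set [measurable]: "thr_set c i \<in> sets borel"
  by (cases "i = 0") (simp add: thr_set_def, simp add: thr_set_eq_small_upset)

lemma slice_small_upset:
  assumes "0 \<le> x" "x < 1"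
  shows "Pair x -` small_upset a = {max 0 (1 - a / (1 - x))..1}"
proof -
  have threshold: "(1 - x) * (1 - y) \<le> a \<longleftrightarrow> 1 - a / (1 - x) \<le> y" for y
  proof -
    have "1 - a / (1 - x) \<le> y \<longleftrightarrow> 1 - y \<le> a / (1 - x)" by linarith
    also have "\<dots> \<longleftrightarrow> (1 - y) * (1 - x) \<le> a" using assms by (simp add: pos_le_divide_eq)
    finally show ?thesis by (simp add: mult.commute)
  qed
  have "Pair x -` small_upset a = {y. 0 \<le> y \<and> y \<le> 1 \<and> (1 - x) * (1 - y) \<le> a}"
    using assms by (auto simp: small_upset_eq Xsq_def)
  also have "\<dots> = {max 0 (1 - a / (1 - x))..1}"
    by (rule set_eqI) (simp only: mem_Collect_eq atLeastAtMost_iff max.bounded_iff threshold, blast)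
  finally show ?thesis .
qed

lemma emeasure_slice_small_upset:
  assumes "0 < a" "0 \<le> x" "x < 1"
  shows "emeasure lborel (Pair x -` small_upset a) = ennreal (min 1 (a / (1 - x)))"
proof -
  have "1 - max 0 (1 - a / (1 - x)) = min 1 (a / (1 - x))"
    by (simp add: min_def max_def)
  moreover have "max 0 (1 - a / (1 - x)) \<le> 1"
    using assms by simp
  ultimately show ?thesis
    using assms by (simp add: slice_small_upset)
qed

lemma emeasure_slice_small_upset_scale:
  assumes "0 < \<alpha>" "\<alpha> \<le> 1" "0 < a"
  shows "ennreal \<alpha> * emeasure lborel (Pair x -` small_upset a) \<le> emeasure lborel (Pair x -` small_upset (\<alpha> * a))"
proof -
  have \<alpha>a: "0 < \<alpha> * a" using assms by simp
  consider "0 \<le> x" "x < 1" | "x = 1" | "x < 0 \<or> 1 < x" by linarith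
  then show ?thesis
  proof cases
    case 1
    define t where "t = a / (1 - x)"
    have "\<alpha> * min 1 t \<le> min 1 (\<alpha> * t)"
    proof (rule min.boundedI)
      show "\<alpha> * min 1 t \<le> 1" using assms 1 by (intro mult_le_one) (auto simp: t_def)
      show "\<alpha> * min 1 t \<le> \<alpha> * t" using assms by (intro mult_left_mono) auto
    qed
    moreover have "0 \<le> min 1 t" using assms 1 by (simp add: t_def)
    ultimately show ?thesis
      using assms 1 \<alpha>a
      by (simp add: emeasure_slice_small_upset t_def ennreal_mult[symmetric] ennreal_leI)
  next
    case 2
    then have "Pair x -` small_upset b = {0..1}" if "0 < b" for b
      using that by (auto simp: small_upset_eq Xsq_def)
    moreover have "ennreal \<alpha> * 1 \<le> 1"
      using assms by (simp add: ennreal_leI del: ennreal_1)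
    ultimately show ?thesis
      using assms \<alpha>a by simp
  next
    case 3
    then have "Pair x -` small_upset b = {}" for b
      by (auto simp: small_upset_eq Xsq_def)
    then show ?thesis
      by simp
  qed
qed

lemma sets_borel_prod_real: "sets (borel \<Otimes>\<^sub>M borel) = sets (borel :: (real \<times> real) measure)"
  by (simp only: borel_prod)

lemma emeasure_lborel_real_pair:
  "S \<in> sets borel \<Longrightarrow> emeasure (lborel :: (real \<times> real) measure) S = (\<integral>\<^sup>+x. emeasure lborel (Pair x -` S) \<partial>lborel)"
  by (subst lborel_prod[symmetric], subst lborel.emeasure_pair_measure_alt) (auto simp: lborel_prod sets_borel_prod_real)

lemma measure_small_upset_scale:
  assumes "0 < \<alpha>" "\<alpha> \<le> 1" "0 < a"
  shows "\<alpha> * measure mu (small_upset a) \<le> measure mu (small_upset (\<alpha> * a))"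
proof -
  have emeasure_mu_small_upset: "emeasure mu (small_upset b) = emeasure lborel (small_upset b)" for b
    using small_upset_subset[of b] by (simp add: emeasure_mu Int_absorb2)
  have "ennreal \<alpha> * emeasure lborel (small_upset a)
      = (\<integral>\<^sup>+x. ennreal \<alpha> * emeasure lborel (Pair x -` small_upset a) \<partial>lborel)"
    by (simp add: emeasure_lborel_real_pair nn_integral_cmult lborel.measurable_emeasure_Pair sets_borel_prod_real)
  also have "\<dots> \<le> (\<integral>\<^sup>+x. emeasure lborel (Pair x -` small_upset (\<alpha> * a)) \<partial>lborel)"
    by (intro nn_integral_mono emeasure_slice_small_upset_scale assms)
  also have "\<dots> = emeasure lborel (small_upset (\<alpha> * a))"
    by (simp add: emeasure_lborel_real_pair)
  finally have "ennreal (\<alpha> * measure mu (small_upset a)) \<le> ennreal (measure mu (small_upset (\<alpha> * a)))"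
    using assms by (simp add: emeasure_mu_small_upset[symmetric] mu.emeasure_eq_measure ennreal_mult')
  then show ?thesis
    by (simp add: ennreal_le_iff)
qed

lemma measure_small_upset_ge:
  assumes "0 < a" "a \<le> 1"
  shows "a \<le> measure mu (small_upset a)"
proof -
  have "measure mu Xsq = 1"
    using emeasure_mu[OF sets_Xsq] by (simp add: measure_def emeasure_Xsq)
  then show ?thesis
    using measure_small_upset_scale[OF assms, of 1] by (simp add: small_upset_1)
qed

section \<open>The threshold rule\<close>

lemma nsel_attains: "k \<le> nsel c \<omega> T \<Longrightarrow> \<exists>T'\<le>T. nsel c \<omega> T' = k"
proof (induction T)
  case (Suc T)
  then show ?case
    by (cases "k \<le> nsel c \<omega> T") (auto intro: le_SucI split: if_splits)
qed simp

lemma good_event_if_hits: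
  assumes "n \<le> nsel c \<omega> T" and "\<alpha> * real n / 4 \<le> real (hits (thr_set c) (thr_set c n) m n 0 \<omega> T)"
  shows "good_event c \<alpha> n \<omega>"
proof -
  obtain T' where "T' \<le> T" "nsel c \<omega> T' = n"
    using nsel_attains[OF assms(1)] by blast
  have "{t. t < T \<and> m \<le> nsel c \<omega> t \<and> nsel c \<omega> t < n \<and> selected c \<omega> t \<and> \<omega> t \<in> thr_set c n}
      \<subseteq> {t. t < T' \<and> selected c \<omega> t \<and> \<omega> t \<in> thr_set c n}"
    using \<open>nsel c \<omega> T' = n\<close> stage_mono[of T' _ "thr_set c" 0 \<omega>]
    by (auto simp: nsel_eq_stage not_less[symmetric])
  then have "hits (thr_set c) (thr_set c n) m n 0 \<omega> T \<le> card {t. t < T' \<and> selected c \<omega> t \<and> \<omega> t \<in> thr_set c n}"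
    unfolding hits_def by (intro card_mono) (auto simp: selected_def nsel_eq_stage)
  then show ?thesis
    using assms(2) \<open>nsel c \<omega> T' = n\<close> unfolding good_event_def by (intro exI[of _ T']) simp
qed

lemma measurable_sample [measurable]: "(\<lambda>\<omega>. \<omega> t) \<in> measurable sample_space borel"
proof -
  have "(\<lambda>\<omega>. \<omega> t) \<in> measurable sample_space mu"
    unfolding sample_space_def by measurable
  moreover have "measurable sample_space mu = measurable sample_space borel"
    by (rule measurable_cong_sets) simp_all
  ultimately show ?thesis
    by simp
qed

lemma measurable_nsel: "(\<lambda>\<omega>. nsel c \<omega> t) \<in> measurable sample_space (count_space UNIV)"
proof (induction t)
  case (Suc t)
  have "(\<lambda>\<omega>. (\<lambda>k \<omega>. if \<omega> t \<in> thr_set c k then k + 1 else k) (nsel c \<omega> t) \<omega>)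
      \<in> measurable sample_space (count_space UNIV)"
    by (rule measurable_compose_countable'[OF _ Suc.IH]) simp_all
  moreover have "(\<lambda>\<omega>. nsel c \<omega> (Suc t)) = (\<lambda>\<omega>. (\<lambda>k \<omega>. if \<omega> t \<in> thr_set c k then k + 1 else k) (nsel c \<omega> t) \<omega>)"
    by (rule ext) simp
  ultimately show ?case
    by simp
qed simp

lemma real_card_eq_sum: "real (card {t. t < (T::nat) \<and> P t}) = (\<Sum>t<T. if P t then 1 else 0)"
proof -
  have "{t. t < T \<and> P t} = {t \<in> {..<T}. P t}"
    by auto
  then have "real (card {t. t < T \<and> P t}) = (\<Sum>t\<in>{t \<in> {..<T}. P t}. 1)"
    by simp
  also have "\<dots> = (\<Sum>t<T. if P t then 1 else 0)"
    by (rule sum.inter_filter) (rule finite_lessThan)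
  finally show ?thesis .
qed

lemma sets_not_good_event: "{\<omega> \<in> space sample_space. \<not> good_event c \<alpha> n \<omega>} \<in> sets sample_space"
proof -
  have "Measurable.pred sample_space (\<lambda>\<omega>. (\<lambda>k \<omega>. \<omega> t \<in> thr_set c k \<and> \<omega> t \<in> thr_set c n) (nsel c \<omega> t) \<omega>)" for t
    by (rule measurable_compose_countable'[OF _ measurable_nsel]) simp_all
  then have count: "(\<lambda>\<omega>. real (card {t. t < T \<and> selected c \<omega> t \<and> \<omega> t \<in> thr_set c n})) \<in> borel_measurable sample_space" for T
    unfolding real_card_eq_sum selected_def
    by (intro borel_measurable_sum measurable_If measurable_const) (simp_all add: pred_def)
  have "Measurable.pred sample_space (\<lambda>\<omega>. nsel c \<omega> T = n)" for T
    by (rule pred_count_space_const1[OF measurable_nsel])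
  moreover have "Measurable.pred sample_space
      (\<lambda>\<omega>. \<alpha> * real n / 4 \<le> real (card {t. t < T \<and> selected c \<omega> t \<and> \<omega> t \<in> thr_set c n}))" for T
    using count[of T] by measurable
  ultimately have "Measurable.pred sample_space (good_event c \<alpha> n)"
    unfolding good_event_def by measurable
  then show ?thesis
    by measurable
qed

lemma thr_set_antimono:
  assumes c_noninc: "\<And>i j. 1 \<le> i \<Longrightarrow> i \<le> j \<Longrightarrow> c j \<le> c i" and "j \<le> k"
  shows "thr_set c k \<subseteq> thr_set c j"
proof (cases "j = 0")
  case True
  then show ?thesis
    by (auto simp: thr_set_def)
next
  case False
  then show ?thesis
    using assms by (simp add: thr_set_eq_small_upset small_upset_mono)
qed

lemma measure_thr_set_pos:
  assumes "1 \<le> n" "0 < c n" "c n \<le> 1"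
  shows "0 < measure mu (thr_set c n)"
  using assms measure_small_upset_ge[of "c n"] by (simp add: thr_set_eq_small_upset)

lemma measure_thr_set_scale:
  assumes c_range: "\<And>i. i \<ge> 1 \<Longrightarrow> 0 < c i \<and> c i \<le> 1"
    and c_noninc: "\<And>i j. 1 \<le> i \<Longrightarrow> i \<le> j \<Longrightarrow> c j \<le> c i"
    and \<alpha>: "0 < \<alpha>" "\<alpha> \<le> 1" and "1 \<le> m" "m \<le> j" "1 \<le> n" and ratio: "\<alpha> * c m \<le> c n"
  shows "\<alpha> * measure mu (thr_set c j) \<le> measure mu (thr_set c n)"
proof -
  have "\<alpha> * measure mu (thr_set c j) \<le> \<alpha> * measure mu (small_upset (c m))"
    using assms by (intro mult_left_mono mu.finite_measure_mono)
      (auto simp: thr_set_eq_small_upset[symmetric] thr_set_antimono)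
  also have "\<dots> \<le> measure mu (small_upset (\<alpha> * c m))"
    using assms by (intro measure_small_upset_scale) auto
  also have "\<dots> \<le> measure mu (thr_set c n)"
    using assms by (intro mu.finite_measure_mono) (auto simp: thr_set_eq_small_upset small_upset_mono)
  finally show ?thesis .
qed

lemma prob_not_good_event_le:
  assumes c_range: "\<And>i. i \<ge> 1 \<Longrightarrow> 0 < c i \<and> c i \<le> 1"
    and c_noninc: "\<And>i j. 1 \<le> i \<Longrightarrow> i \<le> j \<Longrightarrow> c j \<le> c i"
    and \<alpha>: "0 < \<alpha>" "\<alpha> \<le> 1" and n: "2 \<le> n" and ratio: "\<alpha> \<le> c n / c (n div 2)"
  shows "measure sample_space {\<omega> \<in> space sample_space. \<not> good_event c \<alpha> n \<omega>}
    \<le> 2 powr (\<alpha> * n / 4) * (1 - \<alpha>/2) ^ (n - n div 2)"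
  unfolding sample_space_def
proof (rule mu.prob_few_hits_le[where B = "thr_set c n" and a = "measure mu (thr_set c n)"])
  show "\<alpha> * measure mu (thr_set c j) \<le> measure mu (thr_set c j \<inter> thr_set c n)"
    if "n div 2 \<le> j" "j < n" for j
    using that n ratio c_range[of "n div 2"] c_noninc
    by (subst Int_absorb1) (auto simp: pos_le_divide_eq thr_set_antimono
        intro!: measure_thr_set_scale[OF c_range c_noninc \<alpha>, where m = "n div 2"])
  show "measure mu (thr_set c n) \<le> measure mu (thr_set c j)" if "j < n" for j
    using that c_noninc by (intro mu.finite_measure_mono thr_set_antimono) auto
  show "real (hits (thr_set c) (thr_set c n) (n div 2) n 0 \<omega> T) < \<alpha> * n / 4"
    if "\<omega> \<in> {\<omega> \<in> space (PiM UNIV (\<lambda>_. mu)). \<not> good_event c \<alpha> n \<omega>}" "n \<le> stage (thr_set c) 0 \<omega> T" for \<omega> T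
    using that good_event_if_hits[of n c \<omega> T \<alpha> "n div 2"] by (force simp: nsel_eq_stage)
qed (use \<alpha> n c_range[of n] measure_thr_set_pos[of n c] sets_not_good_event[unfolded sample_space_def] in auto)

lemma exponential_bound:
  fixes \<alpha> :: real and n :: nat
  assumes "0 < \<alpha>" "\<alpha> \<le> 1"
  shows "2 powr (\<alpha> * n / 4) * (1 - \<alpha>/2) ^ (n - n div 2) \<le> exp (- (\<alpha> * (1 - ln 2) / 4) * n)"
proof -
  have "(1 - \<alpha>/2) ^ (n - n div 2) \<le> exp (-\<alpha>/2) ^ (n - n div 2)"
    using assms exp_ge_add_one_self[of "-\<alpha>/2"] by (intro power_mono) simp_all
  also have "\<dots> = exp (real (n - n div 2) * (-\<alpha>/2))"
    by (simp flip: exp_of_nat_mult)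
  also have "\<dots> \<le> exp (real n / 2 * (-\<alpha>/2))"
    using assms by (intro exp_mono mult_right_mono_neg) linarith+
  finally have "2 powr (\<alpha> * n / 4) * (1 - \<alpha>/2) ^ (n - n div 2) \<le> exp (\<alpha> * n / 4 * ln 2) * exp (real n / 2 * (-\<alpha>/2))"
    by (simp add: powr_def)
  also have "\<dots> = exp (- (\<alpha> * (1 - ln 2) / 4) * n)"
    by (simp flip: exp_add) (simp add: field_simps)
  finally show ?thesis .
qed

lemma exp_decay_in_smallo:
  fixes P :: "nat \<Rightarrow> real"
  assumes "eventually (\<lambda>n. P n \<le> exp (- \<beta> * n)) at_top" "\<And>n. 0 \<le> P n" "0 < \<beta>"
    and "c \<in> \<Omega>(\<lambda>i. 1 / real i ^ k)"
  shows "P \<in> o(c)"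
proof -
  have "P \<in> O(\<lambda>n. exp (- \<beta> * n))"
    using assms(1,2) by (intro bigoI[where c = 1]) (auto elim!: eventually_mono)
  also have "(\<lambda>n. exp (- \<beta> * n)) \<in> o(\<lambda>i. 1 / real i ^ k)"
    using assms(3) by real_asymp
  also have "(\<lambda>i. 1 / real i ^ k) \<in> O(c)"
    using assms(4) by (simp add: bigomega_iff_bigo)
  finally show ?thesis .
qed

lemma le_1_if_ratio_le:
  fixes c :: "nat \<Rightarrow> real" and i :: nat
  assumes c_range: "\<And>i. i \<ge> 1 \<Longrightarrow> 0 < c i \<and> c i \<le> 1"
    and c_noninc: "\<And>i j. 1 \<le> i \<Longrightarrow> i \<le> j \<Longrightarrow> c j \<le> c i"
    and "2 \<le> i" "\<alpha> \<le> c i / c (i div 2)"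
  shows "\<alpha> \<le> 1"
proof -
  have "1 \<le> i div 2" "i div 2 \<le> i"
    using assms(3) by auto
  then have "c i / c (i div 2) \<le> 1"
    using c_range[of "i div 2"] c_noninc[of "i div 2" i] by simp
  then show ?thesis
    using assms(4) by simp
qed

theorem lemma5:
  fixes c :: "nat \<Rightarrow> real" and \<alpha> :: real
  assumes c_range: "\<And>i. i \<ge> 1 \<Longrightarrow> 0 < c i \<and> c i \<le> 1"
    and c_noninc: "\<And>i j. 1 \<le> i \<Longrightarrow> i \<le> j \<Longrightarrow> c j \<le> c i"
    and c_poly: "\<exists>k::nat. c \<in> \<Omega>(\<lambda>i. 1 / real i ^ k)"
    and alpha_pos: "\<alpha> > 0"
    and c_ratio: "eventually (\<lambda>i. c i / c (i div 2) \<ge> \<alpha>) at_top"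
  shows "(\<forall>n. {\<omega> \<in> space sample_space. \<not> good_event c \<alpha> n \<omega>} \<in> sets sample_space)
       \<and> (\<lambda>n. measure sample_space {\<omega> \<in> space sample_space. \<not> good_event c \<alpha> n \<omega>})
           \<in> o(\<lambda>n. c n)"
proof (intro conjI allI sets_not_good_event)
  obtain N where N: "\<And>i. N \<le> i \<Longrightarrow> \<alpha> \<le> c i / c (i div 2)"
    using c_ratio unfolding eventually_at_top_linorder by blast
  obtain k :: nat where k: "c \<in> \<Omega>(\<lambda>i. 1 / real i ^ k)"
    using c_poly by blast
  have \<alpha>_le_1: "\<alpha> \<le> 1"
    using N[of "max N 2"] by (intro le_1_if_ratio_le[OF c_range c_noninc, where i = "max N 2"]) auto
  have "eventually (\<lambda>n. measure sample_space {\<omega> \<in> space sample_space. \<not> good_event c \<alpha> n \<omega>}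
      \<le> exp (- (\<alpha> * (1 - ln 2) / 4) * n)) at_top"
    unfolding eventually_at_top_linorder using N
    by (intro exI[of _ "max N 2"] allI impI order_trans[OF prob_not_good_event_le exponential_bound]
        c_range c_noninc alpha_pos \<alpha>_le_1) auto
  then show "(\<lambda>n. measure sample_space {\<omega> \<in> space sample_space. \<not> good_event c \<alpha> n \<omega>}) \<in> o(\<lambda>n. c n)"
    using alpha_pos ln_2_less_1 by (intro exp_decay_in_smallo[OF _ _ _ k, where \<beta> = "\<alpha> * (1 - ln 2) / 4"]) simp_all
qed

end
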